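(* Let $(M,g,f,\mu)$ be a non-isotropic quasi-Einstein Lorentzian structure of dimension $4$ with $\mu\neq -\frac12$, such that $\operatorname{div}W=0$ and $W(X,\nabla f,Z,\nabla f)=0$ for all vector fields $X,Z$. Let $E_1=\nabla f/\|\nabla f\|$, where $\|\nabla f\|=|g(\nabla f,\nabla f)|^{1/2}$, and complete it to any local orthonormal frame $\{E_1,E_2,E_3,E_4\}$. Then $\rho(E_i,E_j)=0$ for all $i\neq j$, i.e. the Ricci operator is diagonal in this frame.
   Context: Let $(M,g)$ be a pseudo-Riemannian manifold with Levi-Civita connection $\nabla$, Ricci tensor $\rho$, scalar curvature $\tau$, Hessian $\operatorname{Hes}_f=\nabla df$. The structure $(M,g,f,\mu)$, with $f$ a smooth function and $\mu$ a real constant, is called quasi-Einstein (qE) if there is a smooth function $\lambda$ with $\operatorname{Hes}_f+\rho-\mu\, df\otimes df=\lambda g$. It is called non-isotropic if $g(\nabla f,\nabla f)\neq 0$ everywhere. Curvature convention: $R(X,Y)=\nabla_{[X,Y]}-[\nabla_X,\nabla_Y]$, $R(X,Y,Z,T)=g(R(X,Y)Z,T)$. In dimension 4 the Weyl tensor is $W(X,Y,Z,T)=R(X,Y,Z,T)+\frac{\tau}{6}\{g(X,Z)g(Y,T)-g(X,T)g(Y,Z)\}+\frac12\{\rho(X,T)g(Y,Z)-\rho(X,Z)g(Y,T)+\rho(Y,Z)g(X,T)-\rho(Y,T)g(X,Z)\}$, and $\operatorname{div}W(X,Y,Z)=-\frac12\{(\nabla_X\rho)(Y,Z)-(\nabla_Y\rho)(X,Z)\}+\frac1{12}\{X(\tau)g(Y,Z)-Y(\tau)g(X,Z)\}$.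 Harmonic Weyl tensor means $\operatorname{div}W=0$. *)

theory Defs
  imports "HOL-Analysis.Analysis"
begin

text \<open>Local (coordinate chart) model of a 4-dimensional pseudo-Riemannian manifold:
  an open set U of real^4 with a metric given by a matrix-valued function g.\<close>

type_synonym pt = "real^4"
type_synonym metric = "pt \<Rightarrow> real^4^4"

definition pd :: "4 \<Rightarrow> (pt \<Rightarrow> real) \<Rightarrow> pt \<Rightarrow> real" where
  "pd i F x = deriv (\<lambda>t. F (x + t *\<^sub>R axis i 1)) 0"

fun iter_pd :: "4 list \<Rightarrow> (pt \<Rightarrow> real) \<Rightarrow> pt \<Rightarrow> real" where
  "iter_pd [] F = F"
| "iter_pd (i # is) F = pd i (iter_pd is F)"

definition smooth_fun :: "pt set \<Rightarrow> (pt \<Rightarrow> real) \<Rightarrow> bool" where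
  "smooth_fun U F \<longleftrightarrow> (\<forall>is. continuous_on U (iter_pd is F) \<and>
      (\<forall>x\<in>U. \<forall>i. (\<lambda>t. iter_pd is F (x + t *\<^sub>R axis i 1)) differentiable (at 0)))"

definition minkowski :: "real^4^4" where
  "minkowski = (\<chi> i j. if i = j then (if i = 0 then -1 else 1) else 0)"

definition lorentzian_metric :: "pt set \<Rightarrow> metric \<Rightarrow> bool" where
  "lorentzian_metric U g \<longleftrightarrow>
     (\<forall>i j. smooth_fun U (\<lambda>y. g y $ i $ j)) \<and>
     (\<forall>x\<in>U. transpose (g x) = g x \<and>
        (\<exists>P::real^4^4. invertible P \<and> transpose P ** g x ** P = minkowski))"

definition gv :: "metric \<Rightarrow> pt \<Rightarrow> real^4 \<Rightarrow> real^4 \<Rightarrow> real" where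
  "gv g x X Y = (\<Sum>i\<in>UNIV. \<Sum>j\<in>UNIV. g x $ i $ j * X $ i * Y $ j)"

definition gi :: "metric \<Rightarrow> pt \<Rightarrow> 4 \<Rightarrow> 4 \<Rightarrow> real" where
  "gi g x k l = matrix_inv (g x) $ k $ l"

definition Chr :: "metric \<Rightarrow> pt \<Rightarrow> 4 \<Rightarrow> 4 \<Rightarrow> 4 \<Rightarrow> real" where
  "Chr g x k i j = (1/2) * (\<Sum>l\<in>UNIV. gi g x k l *
      (pd i (\<lambda>y. g y $ j $ l) x + pd j (\<lambda>y. g y $ i $ l) x - pd l (\<lambda>y. g y $ i $ j) x))"

text \<open>Rstd g x l i j k: component l of ([nabla_i,nabla_j] - nabla_[.,.]) d_k (standard sign).\<close>
definition Rstd :: "metric \<Rightarrow> pt \<Rightarrow> 4 \<Rightarrow> 4 \<Rightarrow> 4 \<Rightarrow> 4 \<Rightarrow> real" where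
  "Rstd g x l i j k = pd i (\<lambda>y. Chr g y l j k) x - pd j (\<lambda>y. Chr g y l i k) x
     + (\<Sum>m\<in>UNIV. Chr g x m j k * Chr g x l i m - Chr g x m i k * Chr g x l j m)"

text \<open>Paper's convention R(X,Y) = nabla_[X,Y] - [nabla_X,nabla_Y], R(X,Y,Z,T) = g(R(X,Y)Z,T).\<close>
definition Rc :: "metric \<Rightarrow> pt \<Rightarrow> 4 \<Rightarrow> 4 \<Rightarrow> 4 \<Rightarrow> 4 \<Rightarrow> real" where
  "Rc g x i j k t = - (\<Sum>l\<in>UNIV. Rstd g x l i j k * g x $ l $ t)"

text \<open>Ricci tensor (positive on round spheres).\<close>
definition ric :: "metric \<Rightarrow> pt \<Rightarrow> 4 \<Rightarrow> 4 \<Rightarrow> real" where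
  "ric g x j k = (\<Sum>i\<in>UNIV. Rstd g x i i j k)"

definition scal :: "metric \<Rightarrow> pt \<Rightarrow> real" where
  "scal g x = (\<Sum>j\<in>UNIV. \<Sum>k\<in>UNIV. gi g x j k * ric g x j k)"

definition Wc :: "metric \<Rightarrow> pt \<Rightarrow> 4 \<Rightarrow> 4 \<Rightarrow> 4 \<Rightarrow> 4 \<Rightarrow> real" where
  "Wc g x i j k t = Rc g x i j k t
     + scal g x / 6 * (g x $ i $ k * g x $ j $ t - g x $ i $ t * g x $ j $ k)
     + 1/2 * (ric g x i t * g x $ j $ k - ric g x i k * g x $ j $ t
              + ric g x j k * g x $ i $ t - ric g x j t * g x $ i $ k)"

definition nabla_ric :: "metric \<Rightarrow> pt \<Rightarrow> 4 \<Rightarrow> 4 \<Rightarrow> 4 \<Rightarrow> real" where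
  "nabla_ric g x i j k = pd i (\<lambda>y. ric g y j k) x
     - (\<Sum>m\<in>UNIV. Chr g x m i j * ric g x m k + Chr g x m i k * ric g x j m)"

definition divW :: "metric \<Rightarrow> pt \<Rightarrow> 4 \<Rightarrow> 4 \<Rightarrow> 4 \<Rightarrow> real" where
  "divW g x i j k = - 1/2 * (nabla_ric g x i j k - nabla_ric g x j i k)
     + 1/12 * (pd i (scal g) x * g x $ j $ k - pd j (scal g) x * g x $ i $ k)"

definition hess :: "metric \<Rightarrow> (pt \<Rightarrow> real) \<Rightarrow> pt \<Rightarrow> 4 \<Rightarrow> 4 \<Rightarrow> real" where
  "hess g f x i j = pd i (pd j f) x - (\<Sum>k\<in>UNIV. Chr g x k i j * pd k f x)"

definition grad :: "metric \<Rightarrow> (pt \<Rightarrow> real) \<Rightarrow> pt \<Rightarrow> real^4" where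
  "grad g f x = (\<chi> k. \<Sum>l\<in>UNIV. gi g x k l * pd l f x)"

definition ev2 :: "(4 \<Rightarrow> 4 \<Rightarrow> real) \<Rightarrow> real^4 \<Rightarrow> real^4 \<Rightarrow> real" where
  "ev2 B X Y = (\<Sum>i\<in>UNIV. \<Sum>j\<in>UNIV. B i j * X $ i * Y $ j)"

definition ev4 :: "(4 \<Rightarrow> 4 \<Rightarrow> 4 \<Rightarrow> 4 \<Rightarrow> real) \<Rightarrow> real^4 \<Rightarrow> real^4 \<Rightarrow> real^4 \<Rightarrow> real^4 \<Rightarrow> real" where
  "ev4 B X Y Z T = (\<Sum>i\<in>UNIV. \<Sum>j\<in>UNIV. \<Sum>k\<in>UNIV. \<Sum>l\<in>UNIV.
      B i j k l * X $ i * Y $ j * Z $ k * T $ l)"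

definition quasi_einstein :: "pt set \<Rightarrow> metric \<Rightarrow> (pt \<Rightarrow> real) \<Rightarrow> real \<Rightarrow> bool" where
  "quasi_einstein U g f \<mu> \<longleftrightarrow> smooth_fun U f \<and>
     (\<exists>lam. smooth_fun U lam \<and> (\<forall>x\<in>U. \<forall>i j.
        hess g f x i j + ric g x i j - \<mu> * (pd i f x * pd j f x) = lam x * g x $ i $ j))"

definition non_isotropic :: "pt set \<Rightarrow> metric \<Rightarrow> (pt \<Rightarrow> real) \<Rightarrow> bool" where
  "non_isotropic U g f \<longleftrightarrow> (\<forall>x\<in>U. gv g x (grad g f x) (grad g f x) \<noteq> 0)"

definition harmonic_weyl :: "pt set \<Rightarrow> metric \<Rightarrow> bool" where
  "harmonic_weyl U g \<longleftrightarrow> (\<forall>x\<in>U. \<forall>i j k. divW g x i j k = 0)"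

end

theory Submission
  imports Defs
begin

text \<open>In a chart, the Ricci identity for the Hessian of \<open>f\<close> and the quasi-Einstein equation express
  the curl \<open>(\<nabla>\<^sub>X\<rho>)(Y,Z) - (\<nabla>\<^sub>Y\<rho>)(X,Z)\<close> through \<open>d\<lambda>\<close>, the curvature term \<open>R(X,Y,Z,\<nabla>f)\<close>
  and \<open>\<rho>\<close>. Harmonicity of \<open>W\<close> turns this into a linear identity between \<open>R(X,Y,Z,\<nabla>f)\<close>,
  \<open>d\<lambda> - d\<tau>/6\<close> and \<open>\<rho>\<close>, whose trace determines \<open>d\<lambda> - d\<tau>/6\<close> in terms of \<open>\<rho>(\<nabla>f, \<cdot>)\<close>.
  On the other hand \<open>W(X,\<nabla>f,Z,\<nabla>f) = 0\<close> expresses \<open>R(X,\<nabla>f,Z,\<nabla>f)\<close> through \<open>\<rho>\<close>. For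
  \<open>X, Z\<close> orthogonal to \<open>\<nabla>f\<close> and to each other this yields \<open>(2\<mu> + 1) \<rho>(X,\<nabla>f) = 0\<close> and
  \<open>(\<mu> + 1/2) g(\<nabla>f,\<nabla>f) \<rho>(X,Z) = 0\<close>.\<close>

section \<open>Partial derivatives along coordinate lines\<close>

text \<open>\<open>pd\<close> is defined through \<open>deriv\<close> and carries no information where the derivative does not
  exist, so existence is tracked separately by \<open>has_pd\<close> and \<open>pd_exists\<close>.\<close>

definition has_pd :: "4 \<Rightarrow> (pt \<Rightarrow> real) \<Rightarrow> pt \<Rightarrow> real \<Rightarrow> bool" where
  "has_pd i F x D \<longleftrightarrow> ((\<lambda>t. F (x + t *\<^sub>R axis i 1)) has_real_derivative D) (at 0)"

definition pd_exists :: "4 \<Rightarrow> (pt \<Rightarrow> real) \<Rightarrow> pt \<Rightarrow> bool" where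
  "pd_exists i F x \<longleftrightarrow> (\<exists>D. has_pd i F x D)"

lemma pd_eqI: "has_pd i F x D \<Longrightarrow> pd i F x = D"
  unfolding has_pd_def pd_def by (rule DERIV_imp_deriv)

lemma has_pd_pd: "pd_exists i F x \<Longrightarrow> has_pd i F x (pd i F x)"
  unfolding pd_exists_def using pd_eqI by metis

lemma has_pd_add: "has_pd i F x a \<Longrightarrow> has_pd i G x b \<Longrightarrow> has_pd i (\<lambda>y. F y + G y) x (a + b)"
  unfolding has_pd_def by (rule DERIV_add)

lemma has_pd_diff: "has_pd i F x a \<Longrightarrow> has_pd i G x b \<Longrightarrow> has_pd i (\<lambda>y. F y - G y) x (a - b)"
  unfolding has_pd_def by (rule DERIV_diff)

lemma has_pd_mult:
  "has_pd i F x a \<Longrightarrow> has_pd i G x b \<Longrightarrow> has_pd i (\<lambda>y. F y * G y) x (a * G x + F x * b)"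
  unfolding has_pd_def by (drule (1) DERIV_mult) (simp add: mult.commute)

lemma has_pd_cmult: "has_pd i F x a \<Longrightarrow> has_pd i (\<lambda>y. c * F y) x (c * a)"
  unfolding has_pd_def by (rule DERIV_cmult)

lemma has_pd_sum:
  "(\<And>k. k \<in> S \<Longrightarrow> has_pd i (F k) x (D k)) \<Longrightarrow> has_pd i (\<lambda>y. \<Sum>k\<in>S. F k y) x (\<Sum>k\<in>S. D k)"
  unfolding has_pd_def by (rule DERIV_sum)

lemma pd_exists_add: "pd_exists i F x \<Longrightarrow> pd_exists i G x \<Longrightarrow> pd_exists i (\<lambda>y. F y + G y) x"
  unfolding pd_exists_def using has_pd_add by blast

lemma pd_exists_diff: "pd_exists i F x \<Longrightarrow> pd_exists i G x \<Longrightarrow> pd_exists i (\<lambda>y. F y - G y) x"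
  unfolding pd_exists_def using has_pd_diff by blast

lemma pd_exists_mult: "pd_exists i F x \<Longrightarrow> pd_exists i G x \<Longrightarrow> pd_exists i (\<lambda>y. F y * G y) x"
  unfolding pd_exists_def using has_pd_mult by blast

lemma pd_exists_const: "pd_exists i (\<lambda>y. c) x"
  unfolding pd_exists_def has_pd_def using DERIV_const by blast

lemma pd_exists_cmult: "pd_exists i F x \<Longrightarrow> pd_exists i (\<lambda>y. c * F y) x"
  unfolding pd_exists_def using has_pd_cmult by blast

lemma pd_exists_sum: "(\<And>k. k \<in> S \<Longrightarrow> pd_exists i (F k) x) \<Longrightarrow> pd_exists i (\<lambda>y. \<Sum>k\<in>S. F k y) x"
  unfolding pd_exists_def using has_pd_sum[of S i F x "\<lambda>k. pd i (F k) x"] has_pd_pd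
  by (auto simp: pd_exists_def)

lemma pd_exists_divide:
  "pd_exists i F x \<Longrightarrow> pd_exists i G x \<Longrightarrow> G x \<noteq> 0 \<Longrightarrow> pd_exists i (\<lambda>y. F y / G y) x"
  unfolding pd_exists_def has_pd_def by (auto dest: DERIV_divide)

lemma pd_exists_prod: "(\<And>k. k \<in> S \<Longrightarrow> pd_exists i (F k) x) \<Longrightarrow> pd_exists i (\<lambda>y. \<Prod>k\<in>S. F k y) x"
proof -
  assume "\<And>k. k \<in> S \<Longrightarrow> pd_exists i (F k) x"
  then have "((\<lambda>t. \<Prod>k\<in>S. F k (x + t *\<^sub>R axis i 1)) has_real_derivative
      (\<Sum>k\<in>S. pd i (F k) x * (\<Prod>y\<in>S-{k}. F y (x + 0 *\<^sub>R axis i 1)))) (at 0)"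
    by (intro has_field_derivative_prod) (use has_pd_pd in \<open>auto simp: has_pd_def\<close>)
  then show ?thesis unfolding pd_exists_def has_pd_def by blast
qed

lemmas pd_exists_intros = pd_exists_add pd_exists_diff pd_exists_mult pd_exists_const
  pd_exists_cmult pd_exists_sum pd_exists_divide pd_exists_prod

lemma pd_const: "pd i (\<lambda>y. c) x = 0"
  by (rule pd_eqI) (simp add: has_pd_def)

lemma pd_add: "pd_exists i F x \<Longrightarrow> pd_exists i G x \<Longrightarrow> pd i (\<lambda>y. F y + G y) x = pd i F x + pd i G x"
  by (intro pd_eqI has_pd_add has_pd_pd)

lemma pd_diff: "pd_exists i F x \<Longrightarrow> pd_exists i G x \<Longrightarrow> pd i (\<lambda>y. F y - G y) x = pd i F x - pd i G x"
  by (intro pd_eqI has_pd_diff has_pd_pd)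

lemma pd_mult:
  "pd_exists i F x \<Longrightarrow> pd_exists i G x \<Longrightarrow> pd i (\<lambda>y. F y * G y) x = pd i F x * G x + F x * pd i G x"
  by (intro pd_eqI has_pd_mult has_pd_pd)

lemma pd_cmult: "pd_exists i F x \<Longrightarrow> pd i (\<lambda>y. c * F y) x = c * pd i F x"
  by (intro pd_eqI has_pd_cmult has_pd_pd)

lemma pd_sum:
  "(\<And>k. k \<in> S \<Longrightarrow> pd_exists i (F k) x) \<Longrightarrow> pd i (\<lambda>y. \<Sum>k\<in>S. F k y) x = (\<Sum>k\<in>S. pd i (F k) x)"
  by (intro pd_eqI has_pd_sum has_pd_pd)

lemma eventually_axis_line_in_open:
  fixes x :: pt
  assumes "open U" "x \<in> U"
  shows "eventually (\<lambda>t. x + t *\<^sub>R axis i 1 \<in> U) (nhds 0)"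
proof -
  have "open ((\<lambda>t::real. x + t *\<^sub>R axis i (1::real)) -` U)"
    by (intro continuous_open_vimage assms(1)) (auto intro!: continuous_intros)
  then show ?thesis
    using assms(2) unfolding eventually_nhds by force
qed

lemma eventually_axis_line_eq:
  fixes x :: pt
  assumes "open U" "x \<in> U" "\<And>y. y \<in> U \<Longrightarrow> F y = G y"
  shows "eventually (\<lambda>t. F (x + t *\<^sub>R axis i 1) = G (x + t *\<^sub>R axis i 1)) (nhds 0)"
  using eventually_axis_line_in_open[OF assms(1,2)] by (rule eventually_mono) (use assms(3) in auto)

lemma pd_exists_cong_open:
  assumes "open U" "x \<in> U" "\<And>y. y \<in> U \<Longrightarrow> F y = G y" "pd_exists i F x"
  shows "pd_exists i G x"
proof -
  have "eventually (\<lambda>t. F (x + t *\<^sub>R axis i 1) = G (x + t *\<^sub>R axis i 1)) (nhds 0)"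
    by (rule eventually_axis_line_eq) (use assms in auto)
  then have "((\<lambda>t. F (x + t *\<^sub>R axis i 1)) has_real_derivative D) (at 0) \<longleftrightarrow>
      ((\<lambda>t. G (x + t *\<^sub>R axis i 1)) has_real_derivative D) (at 0)" for D
    by (rule DERIV_cong_ev[OF refl _ refl])
  then show ?thesis
    using assms(4) unfolding pd_exists_def has_pd_def by blast
qed

lemma pd_cong_open:
  assumes "open U" "x \<in> U" "\<And>y. y \<in> U \<Longrightarrow> F y = G y"
  shows "pd i F x = pd i G x"
  unfolding pd_def by (rule deriv_cong_ev[OF eventually_axis_line_eq[OF assms] refl])

lemma iter_pd_append: "iter_pd (xs @ ys) F = iter_pd xs (iter_pd ys F)"
  by (induction xs) auto

lemma smooth_fun_pd: "smooth_fun U F \<Longrightarrow> smooth_fun U (pd i F)"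
  unfolding smooth_fun_def by (metis iter_pd_append iter_pd.simps)

lemma smooth_fun_imp_pd_exists: "smooth_fun U F \<Longrightarrow> x \<in> U \<Longrightarrow> pd_exists i F x"
  unfolding smooth_fun_def pd_exists_def has_pd_def
  by (metis iter_pd.simps(1) DERIV_deriv_iff_real_differentiable)

lemma smooth_fun_imp_continuous_on: "smooth_fun U F \<Longrightarrow> continuous_on U F"
  unfolding smooth_fun_def by (metis iter_pd.simps(1))

lemma has_real_derivative_axis_line:
  assumes "smooth_fun U F" "z + s *\<^sub>R axis i 1 \<in> U"
  shows "((\<lambda>r. F (z + r *\<^sub>R axis i 1)) has_real_derivative pd i F (z + s *\<^sub>R axis i 1)) (at s)"
proof -
  have "((\<lambda>t. F (z + s *\<^sub>R axis i 1 + t *\<^sub>R axis i 1)) has_real_derivative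
      pd i F (z + s *\<^sub>R axis i 1)) (at 0)"
    using has_pd_pd[OF smooth_fun_imp_pd_exists[OF assms]] unfolding has_pd_def .
  then have "((\<lambda>t. F (z + (t + s) *\<^sub>R axis i 1)) has_real_derivative pd i F (z + s *\<^sub>R axis i 1)) (at 0)"
    by (simp add: scaleR_add_left algebra_simps)
  then show ?thesis
    using DERIV_shift[of "\<lambda>r. F (z + r *\<^sub>R axis i 1)" _ 0 s] by simp
qed

section \<open>Symmetry of second partial derivatives\<close>

definition second_difference :: "(pt \<Rightarrow> real) \<Rightarrow> pt \<Rightarrow> 4 \<Rightarrow> 4 \<Rightarrow> real \<Rightarrow> real" where
  "second_difference F x i j h =
     F (x + h *\<^sub>R axis i 1 + h *\<^sub>R axis j 1) - F (x + h *\<^sub>R axis i 1) - F (x + h *\<^sub>R axis j 1) + F x"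

lemma second_difference_commute: "second_difference F x i j h = second_difference F x j i h"
  unfolding second_difference_def by (simp add: algebra_simps)

lemma second_difference_mean_value:
  assumes F: "smooth_fun U F" and h: "0 < h"
    and square: "\<And>s t. 0 \<le> s \<Longrightarrow> s \<le> h \<Longrightarrow> 0 \<le> t \<Longrightarrow> t \<le> h \<Longrightarrow>
       x + s *\<^sub>R axis i 1 + t *\<^sub>R axis j 1 \<in> U"
  obtains \<xi> \<eta> where "0 < \<xi>" "\<xi> < h" "0 < \<eta>" "\<eta> < h"
    "second_difference F x i j h = h\<^sup>2 * pd j (pd i F) (x + \<xi> *\<^sub>R axis i 1 + \<eta> *\<^sub>R axis j 1)"
proof -
  let ?e = "axis i 1 :: pt" and ?d = "axis j 1 :: pt"
  define \<psi> where "\<psi> s = F (x + s *\<^sub>R ?e + h *\<^sub>R ?d) - F (x + s *\<^sub>R ?e)" for s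
  have "\<exists>\<xi>. 0 < \<xi> \<and> \<xi> < h \<and>
      \<psi> h - \<psi> 0 = (h - 0) * (pd i F (x + \<xi> *\<^sub>R ?e + h *\<^sub>R ?d) - pd i F (x + \<xi> *\<^sub>R ?e))"
  proof (rule MVT2)
    fix s assume s: "0 \<le> s" "s \<le> h"
    have "((\<lambda>r. F (x + h *\<^sub>R ?d + r *\<^sub>R ?e) - F (x + r *\<^sub>R ?e)) has_real_derivative
        pd i F (x + h *\<^sub>R ?d + s *\<^sub>R ?e) - pd i F (x + s *\<^sub>R ?e)) (at s)"
      using square[of s h] square[of s 0] s h
      by (intro DERIV_diff has_real_derivative_axis_line[OF F]) (auto simp: algebra_simps)
    then show "(\<psi> has_real_derivative
        pd i F (x + s *\<^sub>R ?e + h *\<^sub>R ?d) - pd i F (x + s *\<^sub>R ?e)) (at s)"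
      unfolding \<psi>_def by (simp add: algebra_simps)
  qed (use h in auto)
  then obtain \<xi> where \<xi>: "0 < \<xi>" "\<xi> < h" and outer:
    "\<psi> h - \<psi> 0 = h * (pd i F (x + \<xi> *\<^sub>R ?e + h *\<^sub>R ?d) - pd i F (x + \<xi> *\<^sub>R ?e))"
    by auto
  have "\<exists>\<eta>. 0 < \<eta> \<and> \<eta> < h \<and>
      pd i F (x + \<xi> *\<^sub>R ?e + h *\<^sub>R ?d) - pd i F (x + \<xi> *\<^sub>R ?e + 0 *\<^sub>R ?d)
        = (h - 0) * pd j (pd i F) (x + \<xi> *\<^sub>R ?e + \<eta> *\<^sub>R ?d)"
  proof (rule MVT2)
    fix t assume t: "0 \<le> t" "t \<le> h"
    show "((\<lambda>t. pd i F (x + \<xi> *\<^sub>R ?e + t *\<^sub>R ?d)) has_real_derivative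
        pd j (pd i F) (x + \<xi> *\<^sub>R ?e + t *\<^sub>R ?d)) (at t)"
      by (rule has_real_derivative_axis_line[OF smooth_fun_pd[OF F]]) (use square[of \<xi> t] t \<xi> in auto)
  qed (use h in auto)
  then obtain \<eta> where \<eta>: "0 < \<eta>" "\<eta> < h" and inner:
    "pd i F (x + \<xi> *\<^sub>R ?e + h *\<^sub>R ?d) - pd i F (x + \<xi> *\<^sub>R ?e)
       = h * pd j (pd i F) (x + \<xi> *\<^sub>R ?e + \<eta> *\<^sub>R ?d)"
    by auto
  have "second_difference F x i j h = \<psi> h - \<psi> 0"
    unfolding second_difference_def \<psi>_def by simp
  also have "\<dots> = h\<^sup>2 * pd j (pd i F) (x + \<xi> *\<^sub>R ?e + \<eta> *\<^sub>R ?d)"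
    unfolding outer inner by (simp add: power2_eq_square)
  finally show thesis using that \<xi> \<eta> by blast
qed

lemma second_difference_quotient_tendsto:
  assumes U: "open U" and F: "smooth_fun U F" and x: "x \<in> U"
  shows "((\<lambda>h. second_difference F x i j h / h\<^sup>2) \<longlongrightarrow> pd j (pd i F) x) (at_right 0)"
proof (rule tendstoI)
  fix \<epsilon> :: real assume "\<epsilon> > 0"
  let ?D = "pd j (pd i F)"
  have "isCont ?D x"
    using smooth_fun_imp_continuous_on[OF smooth_fun_pd[OF smooth_fun_pd[OF F]]] U x
    by (simp add: continuous_on_eq_continuous_at)
  then obtain d where "d > 0" and d: "\<And>y. dist y x < d \<Longrightarrow> dist (?D y) (?D x) < \<epsilon>"
    using \<open>\<epsilon> > 0\<close> unfolding continuous_at_eps_delta by blast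
  obtain r where "r > 0" "ball x r \<subseteq> U"
    using U x open_contains_ball by blast
  have near: "dist (x + s *\<^sub>R axis i 1 + t *\<^sub>R axis j 1) x < min d r"
    if "\<bar>s\<bar> < min d r / 2" "\<bar>t\<bar> < min d r / 2" for s t
  proof -
    have "dist (x + s *\<^sub>R axis i 1 + t *\<^sub>R axis j 1) x
        \<le> norm (s *\<^sub>R axis i (1::real)) + norm (t *\<^sub>R axis j (1::real))"
      using norm_triangle_ineq[of "s *\<^sub>R axis i (1::real)" "t *\<^sub>R axis j (1::real)"]
      by (simp add: dist_norm add.assoc)
    then show ?thesis using that by simp
  qed
  show "eventually (\<lambda>h. dist (second_difference F x i j h / h\<^sup>2) (?D x) < \<epsilon>) (at_right 0)"
    unfolding eventually_at_right_field
  proof (intro exI conjI allI impI)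
    show "0 < min d r / 2" using \<open>d > 0\<close> \<open>r > 0\<close> by simp
    fix h :: real assume "0 < h" "h < min d r / 2"
    have "x + s *\<^sub>R axis i 1 + t *\<^sub>R axis j 1 \<in> U" if "0 \<le> s" "s \<le> h" "0 \<le> t" "t \<le> h" for s t
      using near[of s t] that \<open>h < min d r / 2\<close> \<open>ball x r \<subseteq> U\<close> by (auto simp: dist_commute)
    then obtain \<xi> \<eta> where "0 < \<xi>" "\<xi> < h" "0 < \<eta>" "\<eta> < h" and mv:
      "second_difference F x i j h = h\<^sup>2 * ?D (x + \<xi> *\<^sub>R axis i 1 + \<eta> *\<^sub>R axis j 1)"
      using second_difference_mean_value[OF F \<open>0 < h\<close>] by blast
    have "dist (?D (x + \<xi> *\<^sub>R axis i 1 + \<eta> *\<^sub>R axis j 1)) (?D x) < \<epsilon>"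
      using near[of \<xi> \<eta>] \<open>\<xi> < h\<close> \<open>\<eta> < h\<close> \<open>0 < \<xi>\<close> \<open>0 < \<eta>\<close> \<open>h < min d r / 2\<close> by (intro d) auto
    then show "dist (second_difference F x i j h / h\<^sup>2) (?D x) < \<epsilon>"
      using \<open>0 < h\<close> by (simp add: mv)
  qed
qed

lemma pd_pd_commute:
  assumes "open U" "smooth_fun U F" "x \<in> U"
  shows "pd i (pd j F) x = pd j (pd i F) x"
  using tendsto_unique[OF trivial_limit_at_right_real second_difference_quotient_tendsto[OF assms]
      second_difference_quotient_tendsto[OF assms, of j i, unfolded second_difference_commute[of F x j i]]]
  by (rule sym)

section \<open>The Levi-Civita connection in a chart\<close>

lemma matrix_inv_right_left:
  fixes A :: "'a::semiring_1^'n^'m"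
  assumes "invertible A"
  shows "A ** matrix_inv A = mat 1 \<and> matrix_inv A ** A = mat 1"
  using assms unfolding invertible_def matrix_inv_def by (rule someI_ex)

lemma transpose_matrix_inv_symmetric:
  fixes A :: "'a::comm_semiring_1^'n^'n"
  assumes "invertible A" "transpose A = A"
  shows "transpose (matrix_inv A) = matrix_inv A"
proof -
  let ?B = "matrix_inv A"
  have "transpose ?B ** A = mat 1"
    using arg_cong[OF conjunct1[OF matrix_inv_right_left[OF assms(1)]], of transpose] assms(2)
    by (simp add: matrix_transpose_mul transpose_mat)
  have "transpose ?B = transpose ?B ** (A ** ?B)"
    by (simp add: matrix_inv_right_left[OF assms(1)] matrix_mul_rid)
  also have "\<dots> = (transpose ?B ** A) ** ?B"
    by (rule matrix_mul_assoc)
  also have "\<dots> = ?B"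
    by (simp add: \<open>transpose ?B ** A = mat 1\<close> matrix_mul_lid)
  finally show ?thesis .
qed

lemma matrix_inv_cramer:
  fixes A :: "real^'n^'n"
  assumes "invertible A"
  shows "matrix_inv A $ k $ l = det (\<chi> a b. if b = k then (if a = l then 1 else 0) else A $ a $ b) / det A"
proof -
  let ?c = "\<chi> k. matrix_inv A $ k $ l"
  let ?b = "\<chi> a. if a = l then 1 else (0::real)"
  have "A *v ?c = ?b"
    using matrix_inv_right_left[OF assms]
    by (auto simp: vec_eq_iff matrix_vector_mult_def matrix_matrix_mult_def mat_def)
  then have "?c = (\<chi> k. det (\<chi> i j. if j = k then ?b $ i else A $ i $ j) / det A)"
    using cramer[of A] assms invertible_det_nz by blast
  then have "?c $ k = det (\<chi> i j. if j = k then ?b $ i else A $ i $ j) / det A"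
    by simp
  then show ?thesis
    by (simp add: if_distrib cong: if_cong)
qed

lemma pd_exists_det:
  fixes M :: "pt \<Rightarrow> real^'n^'n"
  assumes "\<And>a b. pd_exists i (\<lambda>y. M y $ a $ b) x"
  shows "pd_exists i (\<lambda>y. det (M y)) x"
  unfolding det_def by (intro pd_exists_intros assms)

lemma lorentzian_metric_invertible:
  assumes "lorentzian_metric U g" "y \<in> U"
  shows "invertible (g y)"
proof -
  obtain P where P: "invertible P" "transpose P ** g y ** P = minkowski"
    using assms unfolding lorentzian_metric_def by blast
  have "det minkowski = (\<Prod>i\<in>UNIV. minkowski $ i $ i)"
    by (rule det_diagonal) (simp add: minkowski_def)
  then have "det minkowski \<noteq> 0"
    by (simp add: minkowski_def)
  then have "det P * det (g y) * det P \<noteq> 0"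
    using arg_cong[OF P(2), of det] by (simp add: det_mul)
  then show ?thesis
    by (simp add: invertible_det_nz)
qed

lemma UNIV_4_eq: "(UNIV::4 set) = {0, 1, 2, 3}"
  using UNIV_4 by auto

lemma sum_UNIV_4: "(\<Sum>i\<in>(UNIV::4 set). F i) = F 0 + F 1 + F 2 + F 3"
  unfolding UNIV_4_eq by (simp add: add.assoc)

lemma sum_delta_right: "(\<Sum>l\<in>(UNIV::4 set). P l * (if l = t then 1 else 0)) = (P t :: real)"
  by (simp add: if_distrib[of "\<lambda>z. _ * z"] sum.delta' cong: if_cong)

lemma Rstd_antisym: "Rstd g y l i j k = - Rstd g y l j i k"
  unfolding Rstd_def by (simp add: sum_subtractf algebra_simps)

definition Chr1 :: "metric \<Rightarrow> pt \<Rightarrow> 4 \<Rightarrow> 4 \<Rightarrow> 4 \<Rightarrow> real" where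
  "Chr1 g y a b t = 1/2 * (pd a (\<lambda>z. g z $ b $ t) y + pd b (\<lambda>z. g z $ a $ t) y - pd t (\<lambda>z. g z $ a $ b) y)"

lemma Chr_raise_Chr1: "Chr g y m a b = (\<Sum>l\<in>UNIV. gi g y m l * Chr1 g y a b l)"
  unfolding Chr_def Chr1_def sum_distrib_left by (intro sum.cong refl) simp

locale metric_chart =
  fixes U :: "pt set" and g :: metric and x :: pt
  assumes open_U: "open U" and x_in_U: "x \<in> U"
    and smooth_metric: "\<And>a b. smooth_fun U (\<lambda>y. g y $ a $ b)"
    and metric_transpose: "\<And>y. y \<in> U \<Longrightarrow> transpose (g y) = g y"
    and metric_invertible: "\<And>y. y \<in> U \<Longrightarrow> invertible (g y)"
begin

abbreviation "G a b \<equiv> g x $ a $ b"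
abbreviation "Ginv a b \<equiv> gi g x a b"
abbreviation "\<Gamma> m a b \<equiv> Chr g x m a b"
abbreviation "dG i a b \<equiv> pd i (\<lambda>y. g y $ a $ b) x"
abbreviation "ddG i j a b \<equiv> pd i (pd j (\<lambda>y. g y $ a $ b)) x"
abbreviation "d\<Gamma> i m a b \<equiv> pd i (\<lambda>y. Chr g y m a b) x"
abbreviation "\<Gamma>1 a b t \<equiv> Chr1 g x a b t"
abbreviation "d\<Gamma>1 i a b t \<equiv> pd i (\<lambda>y. Chr1 g y a b t) x"

lemma metric_sym: "y \<in> U \<Longrightarrow> g y $ a $ b = g y $ b $ a"
  using arg_cong[OF metric_transpose[of y], of "\<lambda>A. A $ b $ a"] by (simp add: transpose_def)

lemma gi_sym: "y \<in> U \<Longrightarrow> gi g y a b = gi g y b a"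
  using arg_cong[OF transpose_matrix_inv_symmetric[OF metric_invertible metric_transpose, of y],
      of "\<lambda>A. A $ b $ a"]
  unfolding gi_def by (simp add: transpose_def)

lemma g_gi: "y \<in> U \<Longrightarrow> (\<Sum>m\<in>UNIV. g y $ a $ m * gi g y m b) = (if a = b then 1 else 0)"
  using matrix_inv_right_left[OF metric_invertible, of y]
  unfolding gi_def by (simp add: matrix_matrix_mult_def mat_def vec_eq_iff)

lemma gi_g: "y \<in> U \<Longrightarrow> (\<Sum>m\<in>UNIV. gi g y a m * g y $ m $ b) = (if a = b then 1 else 0)"
  using matrix_inv_right_left[OF metric_invertible, of y]
  unfolding gi_def by (simp add: matrix_matrix_mult_def mat_def vec_eq_iff)

lemma pd_exists_g: "pd_exists i (\<lambda>y. g y $ a $ b) x"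
  by (rule smooth_fun_imp_pd_exists[OF smooth_metric x_in_U])

lemma pd_exists_dg: "pd_exists i (pd j (\<lambda>y. g y $ a $ b)) x"
  by (rule smooth_fun_imp_pd_exists[OF smooth_fun_pd[OF smooth_metric] x_in_U])

lemma pd_exists_gi: "pd_exists i (\<lambda>y. gi g y k l) x"
proof (rule pd_exists_cong_open[OF open_U x_in_U])
  let ?M = "\<lambda>y. \<chi> a b. if b = k then (if a = l then 1 else 0) else g y $ a $ b"
  have entries: "pd_exists i (\<lambda>y. ?M y $ a $ b) x" for a b
    by (cases "b = k") (simp_all add: pd_exists_const pd_exists_g)
  have "det (g x) \<noteq> 0"
    using metric_invertible[OF x_in_U] by (simp add: invertible_det_nz)
  then show "pd_exists i (\<lambda>y. det (?M y) / det (g y)) x"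
    by (intro pd_exists_divide pd_exists_det entries pd_exists_g)
  show "det (?M y) / det (g y) = gi g y k l" if "y \<in> U" for y
    unfolding gi_def by (rule sym[OF matrix_inv_cramer[OF metric_invertible[OF that]]])
qed

lemma pd_exists_Chr: "pd_exists i (\<lambda>y. Chr g y k a b) x"
  unfolding Chr_def by (intro pd_exists_intros pd_exists_gi pd_exists_dg)

lemma pd_exists_Chr1: "pd_exists i (\<lambda>y. Chr1 g y a b t) x"
  unfolding Chr1_def by (intro pd_exists_intros pd_exists_dg)

lemma dg_sym: "y \<in> U \<Longrightarrow> pd i (\<lambda>z. g z $ a $ b) y = pd i (\<lambda>z. g z $ b $ a) y"
  by (rule pd_cong_open[OF open_U]) (auto intro: metric_sym)

lemma ddG_commute: "ddG i j a b = ddG j i a b"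
  by (rule pd_pd_commute[OF open_U smooth_metric x_in_U])

lemma Chr_sym: "Chr g x m a b = Chr g x m b a"
  unfolding Chr_raise_Chr1 Chr1_def by (simp add: dg_sym[OF x_in_U, of _ a b] algebra_simps)

lemma dg_eq_Chr1: "y \<in> U \<Longrightarrow> pd i (\<lambda>z. g z $ a $ b) y = Chr1 g y i a b + Chr1 g y i b a"
  unfolding Chr1_def using dg_sym[of y b i a] dg_sym[of y a i b] dg_sym[of y i a b] by (simp add: field_simps)

lemma Chr_lower: "y \<in> U \<Longrightarrow> (\<Sum>m\<in>UNIV. Chr g y m a b * g y $ m $ t) = Chr1 g y a b t"
proof -
  assume y: "y \<in> U"
  have "(\<Sum>m\<in>UNIV. Chr g y m a b * g y $ m $ t)
      = (\<Sum>l\<in>UNIV. Chr1 g y a b l * (\<Sum>m\<in>UNIV. gi g y l m * g y $ m $ t))"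
    unfolding Chr_raise_Chr1 sum_distrib_left sum_distrib_right
    by (subst sum.swap) (simp add: gi_sym[OF y] mult_ac)
  also have "\<dots> = Chr1 g y a b t"
    by (simp add: gi_g[OF y] sum_delta_right)
  finally show ?thesis .
qed

lemma dG_compat: "dG i j k = (\<Sum>m\<in>UNIV. \<Gamma> m i j * G m k + \<Gamma> m i k * G j m)"
proof -
  have "(\<Sum>m\<in>UNIV. \<Gamma> m i k * G j m) = (\<Sum>m\<in>UNIV. \<Gamma> m i k * G m j)"
    by (simp add: metric_sym[OF x_in_U])
  then show ?thesis
    by (simp add: sum.distrib Chr_lower[OF x_in_U] dg_eq_Chr1[OF x_in_U])
qed

lemma dChr1_sym_sum: "d\<Gamma>1 i j k t + d\<Gamma>1 i j t k = ddG i j k t"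
proof -
  have "d\<Gamma>1 i j k t + d\<Gamma>1 i j t k = pd i (\<lambda>y. Chr1 g y j k t + Chr1 g y j t k) x"
    by (simp add: pd_add pd_exists_Chr1)
  also have "\<dots> = ddG i j k t"
    by (rule pd_cong_open[OF open_U x_in_U]) (simp add: dg_eq_Chr1)
  finally show ?thesis .
qed

lemma dChr_lower: "(\<Sum>l\<in>UNIV. d\<Gamma> i l j k * G l t) = d\<Gamma>1 i j k t - (\<Sum>l\<in>UNIV. \<Gamma> l j k * dG i l t)"
proof -
  have "d\<Gamma>1 i j k t = pd i (\<lambda>y. \<Sum>l\<in>UNIV. Chr g y l j k * g y $ l $ t) x"
    by (rule pd_cong_open[OF open_U x_in_U]) (simp add: Chr_lower)
  also have "\<dots> = (\<Sum>l\<in>UNIV. d\<Gamma> i l j k * G l t + \<Gamma> l j k * dG i l t)"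
    by (simp add: pd_sum pd_mult pd_exists_mult pd_exists_Chr pd_exists_g)
  finally show ?thesis by (simp add: sum.distrib)
qed

text \<open>\<open>Rlow i j k t = g(R(\<partial>\<^sub>i,\<partial>\<^sub>j)\<partial>\<^sub>k, \<partial>\<^sub>t)\<close> for the standard sign convention, i.e. \<open>- Rc g x i j k t\<close>.\<close>
definition Rlow :: "4 \<Rightarrow> 4 \<Rightarrow> 4 \<Rightarrow> 4 \<Rightarrow> real" where
  "Rlow i j k t = (\<Sum>l\<in>UNIV. Rstd g x l i j k * G l t)"

definition Chr1_pair :: "4 \<Rightarrow> 4 \<Rightarrow> 4 \<Rightarrow> 4 \<Rightarrow> real" where
  "Chr1_pair a b c d = (\<Sum>l\<in>UNIV. \<Sum>p\<in>UNIV. Ginv l p * \<Gamma>1 a b p * \<Gamma>1 c d l)"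

lemma Chr1_pair_sym: "Chr1_pair a b c d = Chr1_pair c d a b"
proof -
  have "Chr1_pair a b c d = (\<Sum>p\<in>UNIV. \<Sum>l\<in>UNIV. Ginv l p * \<Gamma>1 a b p * \<Gamma>1 c d l)"
    unfolding Chr1_pair_def by (rule sum.swap)
  also have "\<dots> = Chr1_pair c d a b"
    unfolding Chr1_pair_def by (intro sum.cong refl) (simp add: gi_sym[OF x_in_U] mult_ac)
  finally show ?thesis .
qed

lemma Chr_Chr1_eq_pair: "(\<Sum>l\<in>UNIV. \<Gamma> l j k * \<Gamma>1 i t l) = Chr1_pair j k i t"
  unfolding Chr1_pair_def Chr_raise_Chr1 by (simp add: sum_distrib_right sum_distrib_left mult_ac)

lemma Rlow_Chr1: "Rlow i j k t = d\<Gamma>1 i j k t - d\<Gamma>1 j i k t - Chr1_pair j k i t + Chr1_pair i k j t"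
proof -
  have "Rlow i j k t = (\<Sum>l\<in>UNIV. d\<Gamma> i l j k * G l t) - (\<Sum>l\<in>UNIV. d\<Gamma> j l i k * G l t)
      + (\<Sum>m\<in>UNIV. \<Gamma> m j k * (\<Sum>l\<in>UNIV. \<Gamma> l i m * G l t))
      - (\<Sum>m\<in>UNIV. \<Gamma> m i k * (\<Sum>l\<in>UNIV. \<Gamma> l j m * G l t))"
    unfolding Rlow_def Rstd_def by (simp only: sum_UNIV_4) (simp add: algebra_simps)
  then show ?thesis
    unfolding dChr_lower Chr_lower[OF x_in_U] dg_eq_Chr1[OF x_in_U] Chr_Chr1_eq_pair[symmetric]
    by (simp add: sum.distrib distrib_left algebra_simps)
qed

lemma Rlow_antisym: "Rlow i j k t = - Rlow i j t k"
  using dChr1_sym_sum[of i j k t] dChr1_sym_sum[of j i k t] ddG_commute[of i j k t]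
    Chr1_pair_sym[of j t i k] Chr1_pair_sym[of i t j k]
  unfolding Rlow_Chr1 by linarith

lemma trace_Rlow: "(\<Sum>j\<in>UNIV. \<Sum>k\<in>UNIV. Ginv j k * Rlow i j k t) = ric g x i t"
proof -
  have "Ginv j k * Rlow i j k t = - (\<Sum>l\<in>UNIV. Rstd g x l i j t * (G l k * Ginv k j))" for j k
  proof -
    have "Ginv j k * Rlow i j k t = - (Ginv k j * Rlow i j t k)"
      by (simp add: Rlow_antisym[of i j k t] gi_sym[OF x_in_U, of j k])
    then show ?thesis
      unfolding Rlow_def sum_distrib_left by (simp add: mult_ac)
  qed
  then have "(\<Sum>j\<in>UNIV. \<Sum>k\<in>UNIV. Ginv j k * Rlow i j k t)
      = - (\<Sum>j\<in>UNIV. \<Sum>k\<in>UNIV. \<Sum>l\<in>UNIV. Rstd g x l i j t * (G l k * Ginv k j))"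
    by (simp add: sum_negf)
  also have "\<dots> = - (\<Sum>j\<in>UNIV. \<Sum>l\<in>UNIV. Rstd g x l i j t * (\<Sum>k\<in>UNIV. G l k * Ginv k j))"
    unfolding sum_distrib_left by (subst sum.swap) (rule refl)
  also have "\<dots> = - (\<Sum>j\<in>UNIV. Rstd g x j i j t)"
    by (simp add: g_gi[OF x_in_U] sum_delta_right)
  also have "\<dots> = ric g x i t"
    unfolding ric_def by (simp add: Rstd_antisym[of g x _ i] sum_negf)
  finally show ?thesis .
qed

lemma trace_tensor:
  "(\<Sum>j\<in>UNIV. \<Sum>k\<in>UNIV. Ginv j k * (A j * B k)) = (\<Sum>k\<in>UNIV. B k * (\<Sum>j\<in>UNIV. Ginv k j * A j))"
  unfolding sum_distrib_left by (subst sum.swap) (simp add: gi_sym[OF x_in_U] mult_ac)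

lemma trace_g: "(\<Sum>j\<in>UNIV. \<Sum>k\<in>UNIV. Ginv j k * G j k) = 4"
proof -
  have "(\<Sum>j\<in>UNIV. \<Sum>k\<in>UNIV. Ginv j k * G j k) = (\<Sum>j\<in>UNIV. \<Sum>k\<in>UNIV. G j k * Ginv k j)"
    by (simp add: gi_sym[OF x_in_U] mult_ac)
  then show ?thesis by (simp add: g_gi[OF x_in_U])
qed

lemma trace_covector_g: "(\<Sum>j\<in>UNIV. \<Sum>k\<in>UNIV. Ginv j k * (A j * G i k)) = A i"
proof -
  have "(\<Sum>k\<in>UNIV. G i k * (\<Sum>j\<in>UNIV. Ginv k j * A j)) = (\<Sum>j\<in>UNIV. (\<Sum>k\<in>UNIV. G i k * Ginv k j) * A j)"
    unfolding sum_distrib_left sum_distrib_right by (subst sum.swap) (simp add: mult_ac)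
  then show ?thesis
    unfolding trace_tensor by (simp add: g_gi[OF x_in_U] if_distrib[of "\<lambda>z. z * _"] sum.delta cong: if_cong)
qed

end

definition ev1 :: "(4 \<Rightarrow> real) \<Rightarrow> real^4 \<Rightarrow> real" where
  "ev1 A X = (\<Sum>i\<in>UNIV. A i * X $ i)"

definition ev3 :: "(4 \<Rightarrow> 4 \<Rightarrow> 4 \<Rightarrow> real) \<Rightarrow> real^4 \<Rightarrow> real^4 \<Rightarrow> real^4 \<Rightarrow> real" where
  "ev3 T X Y Z = (\<Sum>i\<in>UNIV. \<Sum>j\<in>UNIV. \<Sum>k\<in>UNIV. T i j k * X $ i * Y $ j * Z $ k)"

lemma ev1_add: "ev1 (\<lambda>i. A i + B i) X = ev1 A X + ev1 B X"
  unfolding ev1_def by (simp add: sum.distrib algebra_simps)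

lemma ev1_diff: "ev1 (\<lambda>i. A i - B i) X = ev1 A X - ev1 B X"
  unfolding ev1_def by (simp add: sum_subtractf algebra_simps)

lemma ev1_cmult: "ev1 (\<lambda>i. c * A i) X = c * ev1 A X"
  unfolding ev1_def by (simp add: sum_distrib_left algebra_simps)

lemma ev3_add: "ev3 (\<lambda>i j k. A i j k + B i j k) X Y Z = ev3 A X Y Z + ev3 B X Y Z"
  unfolding ev3_def by (simp add: sum.distrib algebra_simps)

lemma ev3_diff: "ev3 (\<lambda>i j k. A i j k - B i j k) X Y Z = ev3 A X Y Z - ev3 B X Y Z"
  unfolding ev3_def by (simp add: sum_subtractf algebra_simps)

lemma ev3_cmult: "ev3 (\<lambda>i j k. c * A i j k) X Y Z = c * ev3 A X Y Z"
  unfolding ev3_def by (simp add: sum_distrib_left algebra_simps)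

lemma ev3_uminus: "ev3 (\<lambda>i j k. - A i j k) X Y Z = - ev3 A X Y Z"
  unfolding ev3_def by (simp add: sum_negf)

lemma ev3_tensor_first: "ev3 (\<lambda>i j k. A i * B j k) X Y Z = ev1 A X * ev2 B Y Z"
  unfolding ev3_def ev1_def ev2_def sum_product by (simp add: sum_distrib_left mult_ac)

lemma ev3_tensor_second: "ev3 (\<lambda>i j k. A j * B i k) X Y Z = ev1 A Y * ev2 B X Z"
proof -
  have "ev3 (\<lambda>i j k. A j * B i k) X Y Z
      = (\<Sum>j\<in>UNIV. \<Sum>i\<in>UNIV. \<Sum>k\<in>UNIV. A j * B i k * X $ i * Y $ j * Z $ k)"
    unfolding ev3_def by (rule sum.swap)
  then show ?thesis
    unfolding ev1_def ev2_def sum_product by (simp add: sum_distrib_left mult_ac)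
qed

lemma ev4_contract_last: "ev4 W X Y Z T = ev3 (\<lambda>i j k. \<Sum>l\<in>UNIV. W i j k l * T $ l) X Y Z"
  unfolding ev4_def ev3_def by (simp add: sum_distrib_left sum_distrib_right mult_ac)

lemma ev2_scaleR_left: "ev2 B (c *\<^sub>R X) Y = c * ev2 B X Y"
  unfolding ev2_def by (simp add: sum_distrib_left mult_ac)

lemma ev2_scaleR_right: "ev2 B X (c *\<^sub>R Y) = c * ev2 B X Y"
  unfolding ev2_def by (simp add: sum_distrib_left mult_ac)

lemma gv_eq_ev2: "gv g y X Y = ev2 (\<lambda>i j. g y $ i $ j) X Y"
  unfolding gv_def ev2_def by simp

locale function_chart = metric_chart +
  fixes f :: "pt \<Rightarrow> real"
  assumes smooth_f: "smooth_fun U f"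
begin

abbreviation "df a \<equiv> pd a f x"
abbreviation "ddf a b \<equiv> pd a (pd b f) x"
abbreviation "H a b \<equiv> hess g f x a b"
abbreviation "\<rho> a b \<equiv> ric g x a b"
abbreviation "N \<equiv> grad g f x"

lemma ddf_commute: "ddf a b = ddf b a"
  by (rule pd_pd_commute[OF open_U smooth_f x_in_U])

lemma dddf_commute: "pd i (pd a (pd b f)) x = pd a (pd i (pd b f)) x"
  by (rule pd_pd_commute[OF open_U smooth_fun_pd[OF smooth_f] x_in_U])

lemma hess_sym: "H a b = H b a"
  unfolding hess_def using ddf_commute[of a b] Chr_sym by simp

lemma pd_exists_df: "pd_exists i (pd a f) x"
  by (rule smooth_fun_imp_pd_exists[OF smooth_fun_pd[OF smooth_f] x_in_U])

lemma pd_exists_ddf: "pd_exists i (pd a (pd b f)) x"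
  by (rule smooth_fun_imp_pd_exists[OF smooth_fun_pd[OF smooth_fun_pd[OF smooth_f]] x_in_U])

lemma pd_exists_hess: "pd_exists i (\<lambda>y. hess g f y a b) x"
  unfolding hess_def by (intro pd_exists_intros pd_exists_ddf pd_exists_Chr pd_exists_df)

lemma pd_hess: "pd i (\<lambda>y. hess g f y j k) x
    = pd i (pd j (pd k f)) x - (\<Sum>m\<in>UNIV. d\<Gamma> i m j k * df m + \<Gamma> m j k * ddf i m)"
  unfolding hess_def
  by (simp add: pd_diff pd_sum pd_mult pd_exists_intros pd_exists_ddf pd_exists_Chr pd_exists_df)

definition nabla_hess :: "4 \<Rightarrow> 4 \<Rightarrow> 4 \<Rightarrow> real" where
  "nabla_hess i j k = pd i (\<lambda>y. hess g f y j k) x - (\<Sum>m\<in>UNIV. \<Gamma> m i j * H m k + \<Gamma> m i k * H j m)"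

lemma nabla_hess_commute:
  "nabla_hess i j k - nabla_hess j i k = - (\<Sum>p\<in>UNIV. Rstd g x p i j k * df p)"
  unfolding nabla_hess_def pd_hess unfolding hess_def Rstd_def
  by (simp only: sum_UNIV_4) (simp add: algebra_simps dddf_commute[of i j k] Chr_sym ddf_commute)

lemma g_grad: "(\<Sum>t\<in>UNIV. G l t * N $ t) = df l"
proof -
  have "(\<Sum>t\<in>UNIV. G l t * N $ t) = (\<Sum>t\<in>UNIV. \<Sum>m\<in>UNIV. G l t * Ginv t m * df m)"
    unfolding grad_def by (simp add: sum_distrib_left mult_ac)
  also have "\<dots> = (\<Sum>m\<in>UNIV. (\<Sum>t\<in>UNIV. G l t * Ginv t m) * df m)"
    unfolding sum_distrib_right by (rule sum.swap)
  also have "\<dots> = df l"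
    by (simp add: g_gi[OF x_in_U] if_distrib[of "\<lambda>z. z * _"] sum.delta cong: if_cong)
  finally show ?thesis .
qed

lemma gv_grad_right: "gv g x X N = ev1 df X"
proof -
  have "gv g x X N = (\<Sum>i\<in>UNIV. X $ i * (\<Sum>j\<in>UNIV. G i j * N $ j))"
    unfolding gv_def by (simp add: sum_distrib_left mult_ac)
  then show ?thesis
    unfolding ev1_def g_grad by (simp add: mult.commute)
qed

lemma gv_grad_left: "gv g x N X = ev1 df X"
proof -
  have "gv g x N X = gv g x X N"
    unfolding gv_def by (subst sum.swap) (simp add: metric_sym[OF x_in_U] mult_ac)
  then show ?thesis using gv_grad_right by simp
qed

definition Rdf :: "4 \<Rightarrow> 4 \<Rightarrow> 4 \<Rightarrow> real" where
  "Rdf i j k = (\<Sum>p\<in>UNIV. Rstd g x p i j k * df p)"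

definition ric_grad :: "4 \<Rightarrow> real" where
  "ric_grad i = (\<Sum>l\<in>UNIV. \<rho> i l * N $ l)"

lemma Rdf_eq_Rlow_grad: "Rdf i j k = (\<Sum>t\<in>UNIV. Rlow i j k t * N $ t)"
proof -
  have "(\<Sum>t\<in>UNIV. Rlow i j k t * N $ t)
      = (\<Sum>l\<in>UNIV. Rstd g x l i j k * (\<Sum>t\<in>UNIV. G l t * N $ t))"
    unfolding Rlow_def sum_distrib_right sum_distrib_left by (subst sum.swap) (simp add: mult_ac)
  then show ?thesis
    unfolding Rdf_def g_grad by simp
qed

lemma trace_Rdf: "(\<Sum>j\<in>UNIV. \<Sum>k\<in>UNIV. Ginv j k * Rdf i j k) = ric_grad i"
proof -
  have "(\<Sum>j\<in>UNIV. \<Sum>k\<in>UNIV. Ginv j k * Rdf i j k)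
      = (\<Sum>j\<in>UNIV. \<Sum>k\<in>UNIV. \<Sum>t\<in>UNIV. Ginv j k * Rlow i j k t * N $ t)"
    unfolding Rdf_eq_Rlow_grad by (simp add: sum_distrib_left mult_ac)
  also have "\<dots> = (\<Sum>j\<in>UNIV. \<Sum>t\<in>UNIV. \<Sum>k\<in>UNIV. Ginv j k * Rlow i j k t * N $ t)"
    by (intro sum.cong refl sum.swap)
  also have "\<dots> = (\<Sum>t\<in>UNIV. \<Sum>j\<in>UNIV. \<Sum>k\<in>UNIV. Ginv j k * Rlow i j k t * N $ t)"
    by (rule sum.swap)
  also have "\<dots> = ric_grad i"
    unfolding ric_grad_def trace_Rlow[symmetric] by (simp add: sum_distrib_right)
  finally show ?thesis .
qed

lemma Weyl_grad: "(\<Sum>l\<in>UNIV. Wc g x i j k l * N $ l) = - Rdf i j k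
    + scal g x / 6 * (df j * G i k - df i * G j k)
    + 1/2 * (ric_grad i * G j k - df j * \<rho> i k + df i * \<rho> j k - ric_grad j * G i k)"
proof -
  have "(\<Sum>l\<in>UNIV. Rc g x i j k l * N $ l) = - Rdf i j k"
    unfolding Rdf_eq_Rlow_grad Rc_def Rlow_def by (simp add: sum_negf)
  moreover have "(\<Sum>l\<in>UNIV. Wc g x i j k l * N $ l) = (\<Sum>l\<in>UNIV. Rc g x i j k l * N $ l)
      + scal g x / 6 * (G i k * (\<Sum>l\<in>UNIV. G j l * N $ l) - (\<Sum>l\<in>UNIV. G i l * N $ l) * G j k)
      + 1/2 * ((\<Sum>l\<in>UNIV. \<rho> i l * N $ l) * G j k - \<rho> i k * (\<Sum>l\<in>UNIV. G j l * N $ l)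
         + \<rho> j k * (\<Sum>l\<in>UNIV. G i l * N $ l) - (\<Sum>l\<in>UNIV. \<rho> j l * N $ l) * G i k)"
    unfolding Wc_def by (simp only: sum_UNIV_4) (simp add: algebra_simps)
  ultimately show ?thesis
    unfolding g_grad ric_grad_def by (simp add: algebra_simps)
qed

lemma Weyl_grad_ev: "ev4 (Wc g x) X Y Z N = - ev3 Rdf X Y Z
    + scal g x / 6 * (ev1 df Y * gv g x X Z - ev1 df X * gv g x Y Z)
    + 1/2 * (ev1 ric_grad X * gv g x Y Z - ev1 df Y * ev2 \<rho> X Z + ev1 df X * ev2 \<rho> Y Z
      - ev1 ric_grad Y * gv g x X Z)"
  unfolding ev4_contract_last Weyl_grad
  by (simp only: ev3_add ev3_diff ev3_cmult ev3_uminus ev3_tensor_first ev3_tensor_second gv_eq_ev2)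

lemma trace_df_ric: "(\<Sum>j\<in>UNIV. \<Sum>k\<in>UNIV. Ginv j k * (df j * \<rho> i k)) = ric_grad i"
  unfolding trace_tensor ric_grad_def grad_def by simp

end

section \<open>Quasi-Einstein structures with harmonic Weyl tensor\<close>

locale qe_chart = function_chart +
  fixes \<mu> :: real and lam :: "pt \<Rightarrow> real"
  assumes smooth_lam: "smooth_fun U lam"
    and qe_eq: "\<And>y i j. y \<in> U \<Longrightarrow>
      hess g f y i j + ric g y i j - \<mu> * (pd i f y * pd j f y) = lam y * g y $ i $ j"
begin

lemma ric_qe: "y \<in> U \<Longrightarrow> ric g y i j = lam y * g y $ i $ j - hess g f y i j + \<mu> * (pd i f y * pd j f y)"
  using qe_eq[of y i j] by (simp add: algebra_simps)

lemma hess_qe: "H i j = lam x * G i j - \<rho> i j + \<mu> * (df i * df j)"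
  using ric_qe[OF x_in_U, of i j] by simp

lemma ric_sym: "\<rho> i j = \<rho> j i"
  unfolding ric_qe[OF x_in_U] using hess_sym[of i j] metric_sym[OF x_in_U, of i j] by (simp add: mult_ac)

lemma ev2_ric_sym: "ev2 \<rho> X Y = ev2 \<rho> Y X"
  unfolding ev2_def by (subst sum.swap) (simp add: ric_sym mult_ac)

lemma ev2_ric_grad: "ev2 \<rho> X N = ev1 ric_grad X"
  unfolding ev2_def ev1_def ric_grad_def by (simp add: sum_distrib_left mult_ac)

lemma pd_ric: "pd i (\<lambda>y. ric g y j k) x = pd i lam x * G j k + lam x * dG i j k
    - pd i (\<lambda>y. hess g f y j k) x + \<mu> * (ddf i j * df k + df j * ddf i k)"
proof -
  have "pd i (\<lambda>y. ric g y j k) x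
      = pd i (\<lambda>y. lam y * g y $ j $ k - hess g f y j k + \<mu> * (pd j f y * pd k f y)) x"
    by (rule pd_cong_open[OF open_U x_in_U]) (rule ric_qe)
  also have "\<dots> = pd i lam x * G j k + lam x * dG i j k
      - pd i (\<lambda>y. hess g f y j k) x + \<mu> * (ddf i j * df k + df j * ddf i k)"
    using smooth_fun_imp_pd_exists[OF smooth_lam x_in_U]
    by (simp add: pd_add pd_diff pd_mult pd_cmult pd_const pd_exists_intros pd_exists_g pd_exists_hess pd_exists_df)
  finally show ?thesis .
qed

lemma nabla_ric_eq:
  "nabla_ric g x i j k = pd i lam x * G j k - nabla_hess i j k + \<mu> * (H i j * df k + df j * H i k)"
proof -
  have H: "H a b = ddf a b - (\<Sum>m\<in>UNIV. \<Gamma> m a b * df m)" for a b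
    unfolding hess_def ..
  show ?thesis
    unfolding nabla_ric_def pd_ric nabla_hess_def ric_qe[OF x_in_U] dG_compat H[of i j] H[of i k]
    by (simp only: sum_UNIV_4) (simp add: algebra_simps)
qed

lemma nabla_ric_commute: "nabla_ric g x i j k - nabla_ric g x j i k =
    pd i lam x * G j k - pd j lam x * G i k + Rdf i j k + \<mu> * (df j * H i k - df i * H j k)"
  using nabla_hess_commute[of i j k] hess_sym[of i j]
  unfolding nabla_ric_eq Rdf_def by (simp add: algebra_simps)

definition dlam_scal :: "4 \<Rightarrow> real" where
  "dlam_scal i = pd i lam x - pd i (scal g) x / 6"

lemma divW_zero_identity:
  assumes "divW g x i j k = 0"
  shows "dlam_scal i * G j k - dlam_scal j * G i k + Rdf i j k
    + \<mu> * lam x * (df j * G i k - df i * G j k) - \<mu> * (df j * \<rho> i k - df i * \<rho> j k) = 0"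
proof -
  have "dlam_scal i * G j k - dlam_scal j * G i k + Rdf i j k
      + \<mu> * lam x * (df j * G i k - df i * G j k) - \<mu> * (df j * \<rho> i k - df i * \<rho> j k)
      = -2 * divW g x i j k"
    unfolding divW_def nabla_ric_commute dlam_scal_def hess_qe by (simp add: algebra_simps)
  with assms show ?thesis by simp
qed

lemma divW_zero_identity_traced:
  assumes "\<And>j k. divW g x i j k = 0"
  shows "3 * dlam_scal i + (1 - \<mu>) * ric_grad i - 3 * \<mu> * lam x * df i + \<mu> * scal g x * df i = 0"
proof -
  have "0 = (\<Sum>j\<in>UNIV. \<Sum>k\<in>UNIV. Ginv j k * (dlam_scal i * G j k - dlam_scal j * G i k + Rdf i j k
      + \<mu> * lam x * (df j * G i k - df i * G j k) - \<mu> * (df j * \<rho> i k - df i * \<rho> j k)))"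
    using divW_zero_identity[OF assms] by simp
  also have "\<dots> = dlam_scal i * (\<Sum>j\<in>UNIV. \<Sum>k\<in>UNIV. Ginv j k * G j k)
      - (\<Sum>j\<in>UNIV. \<Sum>k\<in>UNIV. Ginv j k * (dlam_scal j * G i k))
      + (\<Sum>j\<in>UNIV. \<Sum>k\<in>UNIV. Ginv j k * Rdf i j k)
      + \<mu> * lam x * ((\<Sum>j\<in>UNIV. \<Sum>k\<in>UNIV. Ginv j k * (df j * G i k))
        - df i * (\<Sum>j\<in>UNIV. \<Sum>k\<in>UNIV. Ginv j k * G j k))
      - \<mu> * ((\<Sum>j\<in>UNIV. \<Sum>k\<in>UNIV. Ginv j k * (df j * \<rho> i k))
        - df i * (\<Sum>j\<in>UNIV. \<Sum>k\<in>UNIV. Ginv j k * \<rho> j k))"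
    by (simp add: sum.distrib sum_subtractf sum_distrib_left algebra_simps)
  also have "\<dots> = 3 * dlam_scal i + (1 - \<mu>) * ric_grad i - 3 * \<mu> * lam x * df i + \<mu> * scal g x * df i"
    unfolding trace_g trace_covector_g trace_Rdf trace_df_ric scal_def[symmetric]
    by (simp add: algebra_simps)
  finally show ?thesis by simp
qed

lemma divW_zero_identity_ev:
  assumes "\<And>i j k. divW g x i j k = 0"
  shows "ev1 dlam_scal X * gv g x Y Z - ev1 dlam_scal Y * gv g x X Z + ev3 Rdf X Y Z
    + \<mu> * lam x * (ev1 df Y * gv g x X Z - ev1 df X * gv g x Y Z)
    - \<mu> * (ev1 df Y * ev2 \<rho> X Z - ev1 df X * ev2 \<rho> Y Z) = 0"
proof -
  have "ev3 (\<lambda>i j k. dlam_scal i * G j k - dlam_scal j * G i k + Rdf i j k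
      + \<mu> * lam x * (df j * G i k - df i * G j k) - \<mu> * (df j * \<rho> i k - df i * \<rho> j k)) X Y Z = 0"
    unfolding ev3_def by (simp add: divW_zero_identity[OF assms])
  then show ?thesis
    by (simp only: ev3_add ev3_diff ev3_cmult ev3_tensor_first ev3_tensor_second gv_eq_ev2)
qed

context
  assumes harmonic: "\<And>i j k. divW g x i j k = 0"
    and weyl_grad: "\<And>X Z. ev4 (Wc g x) X N Z N = 0"
    and non_isotropic: "gv g x N N \<noteq> 0"
    and \<mu>: "\<mu> \<noteq> - 1/2"
begin

lemma ric_grad_orthogonal:
  assumes X: "gv g x X N = 0"
  shows "ev2 \<rho> X N = 0"
proof -
  have dfX: "ev1 df X = 0" and dfN: "ev1 df N = gv g x N N"
    using X gv_grad_right by auto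
  have "ev1 dlam_scal X * gv g x N N - \<mu> * (gv g x N N * ev1 ric_grad X) = 0"
    using divW_zero_identity_ev[OF harmonic, of X N N] weyl_grad[of X N] Weyl_grad_ev[of X N N]
    unfolding X dfX dfN ev2_ric_grad by (simp add: algebra_simps)
  then have "ev1 dlam_scal X = \<mu> * ev1 ric_grad X"
    using non_isotropic by (simp add: algebra_simps)
  moreover have "ev1 (\<lambda>i. 3 * dlam_scal i + (1 - \<mu>) * ric_grad i - 3 * \<mu> * lam x * df i
      + \<mu> * scal g x * df i) X = 0"
    unfolding ev1_def by (simp add: divW_zero_identity_traced[OF harmonic])
  then have "3 * ev1 dlam_scal X + (1 - \<mu>) * ev1 ric_grad X = 0"
    unfolding ev1_add ev1_diff ev1_cmult dfX by simp
  ultimately have "(2 * \<mu> + 1) * ev1 ric_grad X = 0"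
    by (simp add: algebra_simps)
  then show ?thesis
    using \<mu> by (simp add: ev2_ric_grad)
qed

lemma ric_orthogonal_pair:
  assumes X: "gv g x X N = 0" and Z: "gv g x Z N = 0" and XZ: "gv g x X Z = 0"
  shows "ev2 \<rho> X Z = 0"
proof -
  have dfX: "ev1 df X = 0" and dfZ: "ev1 df Z = 0" and NZ: "gv g x N Z = 0"
    using X Z gv_grad_right gv_grad_left by auto
  have dfN: "ev1 df N = gv g x N N"
    using gv_grad_right by simp
  have "ev3 Rdf X N Z = - 1/2 * gv g x N N * ev2 \<rho> X Z"
    using weyl_grad[of X Z] Weyl_grad_ev[of X N Z] unfolding XZ NZ dfX dfN by (simp add: algebra_simps)
  then have "gv g x N N * ((\<mu> + 1/2) * ev2 \<rho> X Z) = 0"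
    using divW_zero_identity_ev[OF harmonic, of X N Z] unfolding XZ NZ dfX dfN by (simp add: algebra_simps)
  then show ?thesis
    using non_isotropic \<mu> by simp
qed

lemma ric_orthogonal:
  assumes X: "X = c *\<^sub>R N \<or> gv g x X N = 0" and Y: "Y = d *\<^sub>R N \<or> gv g x Y N = 0"
    and XY: "gv g x X Y = 0"
  shows "ev2 \<rho> X Y = 0"
  using X Y
proof (elim disjE)
  assume "X = c *\<^sub>R N" "Y = d *\<^sub>R N"
  then have "c * d = 0"
    using XY non_isotropic by (auto simp: gv_eq_ev2 ev2_scaleR_left ev2_scaleR_right)
  then show ?thesis
    using \<open>X = c *\<^sub>R N\<close> \<open>Y = d *\<^sub>R N\<close> by (auto simp: ev2_scaleR_left ev2_scaleR_right)
next
  assume "X = c *\<^sub>R N" "gv g x Y N = 0"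
  then show ?thesis
    using ric_grad_orthogonal ev2_ric_sym by (simp add: ev2_scaleR_left)
next
  assume "gv g x X N = 0" "Y = d *\<^sub>R N"
  then show ?thesis
    using ric_grad_orthogonal by (simp add: ev2_scaleR_right)
next
  assume "gv g x X N = 0" "gv g x Y N = 0"
  then show ?thesis
    using ric_orthogonal_pair XY by blast
qed

end

end

lemma qe_chart_of_quasi_einstein:
  assumes "open U" "lorentzian_metric U g" "x \<in> U" "quasi_einstein U g f \<mu>"
  obtains lam where "qe_chart U g x f \<mu> lam"
proof -
  obtain lam where "smooth_fun U lam" and "\<forall>y\<in>U. \<forall>i j.
      hess g f y i j + ric g y i j - \<mu> * (pd i f y * pd j f y) = lam y * g y $ i $ j"
    using assms(4) unfolding quasi_einstein_def by blast
  then have "qe_chart U g x f \<mu> lam"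
    using assms lorentzian_metric_invertible
    by unfold_locales (auto simp: lorentzian_metric_def quasi_einstein_def)
  then show thesis by (rule that)
qed

theorem lemma2p2:
  fixes U :: "(real^4) set" and g :: metric and f :: "real^4 \<Rightarrow> real" and \<mu> :: real
    and x :: "real^4" and E :: "nat \<Rightarrow> real^4"
  assumes "open U"
    and "lorentzian_metric U g"
    and "quasi_einstein U g f \<mu>"
    and "non_isotropic U g f"
    and "\<mu> \<noteq> - 1/2"
    and "harmonic_weyl U g"
    and "\<forall>y\<in>U. \<forall>X Z. ev4 (Wc g y) X (grad g f y) Z (grad g f y) = 0"
    and "x \<in> U"
    and "E 1 = (1 / sqrt \<bar>gv g x (grad g f x) (grad g f x)\<bar>) *\<^sub>R grad g f x"
    and "\<forall>a\<in>{1..4}. \<forall>b\<in>{1..4}. a \<noteq> b \<longrightarrow> gv g x (E a) (E b) = 0"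
    and "\<forall>a\<in>{1..4}. \<bar>gv g x (E a) (E a)\<bar> = 1"
  shows "\<forall>a\<in>{1..4}. \<forall>b\<in>{1..4}. a \<noteq> b \<longrightarrow> ev2 (ric g x) (E a) (E b) = 0"
proof -
  obtain lam where "qe_chart U g x f \<mu> lam"
    using qe_chart_of_quasi_einstein[OF assms(1,2,8,3)] .
  then interpret qe_chart U g x f \<mu> lam .
  have non_isotropic: "gv g x N N \<noteq> 0"
    using assms(4,8) unfolding non_isotropic_def by blast
  define c where "c = 1 / sqrt \<bar>gv g x N N\<bar>"
  have "c \<noteq> 0"
    unfolding c_def using non_isotropic by simp
  have frame: "E a = c *\<^sub>R N \<or> gv g x (E a) N = 0" if "a \<in> {1..4}" for a
  proof (cases "a = 1")
    case False
    then have "gv g x (E a) (E 1) = 0"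
      using assms(10) that by auto
    then have "c * gv g x (E a) N = 0"
      unfolding assms(9) c_def[symmetric] by (simp add: gv_eq_ev2 ev2_scaleR_right)
    then show ?thesis using \<open>c \<noteq> 0\<close> by simp
  qed (use assms(9) c_def in simp)
  show ?thesis
    using ric_orthogonal[OF _ _ non_isotropic assms(5) frame frame] assms(6-8,10)
    unfolding harmonic_weyl_def by blast
qed

end
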